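(* Suppose one trial with success probability $p\in(0,1)$ is performed and results in success (i.e. $X=1$ with $X\sim B(1,p)$). Put on $p$ the triangle prior with mode $\alpha\in(0,1)$, $$\pi(p)=\begin{cases}\frac{2}{\alpha}p, & 0<p\le\alpha,\\ \frac{2}{1-\alpha}(1-p), & \alpha<p<1.\end{cases}$$ Then the posterior mean of $p$ is $g(\alpha)=\frac{1+\alpha+\alpha^2}{2(1+\alpha)}$, and the unique $\tau\in(0,1)$ satisfying $\tau=g(\tau)$ (the iterative limit obtained by repeatedly replacing the mode of the prior with the posterior mean) is $\tau=\frac{\sqrt5-1}{2}=1/\phi\approx 0.618$, where $\phi=\frac{1+\sqrt5}{2}$ is the Golden Ratio.
   Context: The posterior mean is the Bayes estimate of $p$ under quadratic loss. *)

theory Defs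
  imports "HOL-Analysis.Analysis"
begin

definition triangle_prior :: "real \<Rightarrow> real \<Rightarrow> real" where
  "triangle_prior \<alpha> p =
     (if 0 < p \<and> p \<le> \<alpha> then (2 / \<alpha>) * p
      else if \<alpha> < p \<and> p < 1 then (2 / (1 - \<alpha>)) * (1 - p)
      else 0)"

definition bern_lik :: "nat \<Rightarrow> real \<Rightarrow> real" where
  "bern_lik x p = p ^ x * (1 - p) ^ (1 - x)"

definition posterior_mean :: "real \<Rightarrow> nat \<Rightarrow> real" where
  "posterior_mean \<alpha> x =
     (LINT p:{0<..<1}|lborel. p * bern_lik x p * triangle_prior \<alpha> p) /
     (LINT p:{0<..<1}|lborel. bern_lik x p * triangle_prior \<alpha> p)"

definition g_post :: "real \<Rightarrow> real" where
  "g_post \<alpha> = (1 + \<alpha> + \<alpha>^2) / (2 * (1 + \<alpha>))"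

definition golden_ratio :: real where
  "golden_ratio = (1 + sqrt 5) / 2"

end

theory Submission
  imports Defs
begin

text \<open>
  Conditioning on one success multiplies the prior density by \<open>p\<close>, so the posterior mean is
  the ratio of the second to the first moment of the triangle distribution. Both moments are
  integrals of polynomials over \<open>[0, \<alpha>]\<close> and \<open>[\<alpha>, 1]\<close>; they evaluate to
  \<open>(1 + \<alpha> + \<alpha>\<^sup>2) / 6\<close> and \<open>(1 + \<alpha>) / 3\<close>. For \<open>\<tau> > 0\<close> the fixed-point equation
  \<open>\<tau> = g(\<tau>)\<close> clears denominators to \<open>\<tau>\<^sup>2 + \<tau> - 1 = 0\<close>, whose only positive root is
  \<open>(\<surd>5 - 1) / 2 = 1 / \<phi>\<close>.
\<close>

lemma set_lborel_integral_eq_has_integral_nonneg: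
  fixes f :: "'a::euclidean_space \<Rightarrow> real"
  assumes "(\<lambda>x. indicator S x * f x) \<in> borel_measurable borel"
    and "\<And>x. x \<in> S \<Longrightarrow> 0 \<le> f x"
    and f: "(f has_integral I) S"
  shows "(LINT x:S|lborel. f x) = I"
proof -
  have "f absolutely_integrable_on S"
    using nonnegative_absolutely_integrable_1[OF has_integral_integrable[OF f]] assms(2) .
  then have "(LINT x:S|lebesgue. f x) = I"
    using f by (simp add: set_lebesgue_integral_eq_integral(2) integral_unique)
  moreover have "(LINT x:S|lebesgue. f x) = (LINT x:S|lborel. f x)"
    using assms(1) unfolding set_lebesgue_integral_def
    by (simp add: integral_completion measurable_lborel2)
  ultimately show ?thesis by simp
qed

lemma has_integral_power_Icc:
  fixes a b :: real
  assumes "a \<le> b"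
  shows "((\<lambda>x. x ^ n) has_integral (b ^ Suc n - a ^ Suc n) / Suc n) {a..b}"
proof -
  have "((\<lambda>x. x ^ Suc n / Suc n) has_real_derivative x ^ n) (at x within {a..b})" for x
  proof -
    have "((\<lambda>x. x ^ Suc n) has_real_derivative real (Suc n) * x ^ n) (at x within {a..b})"
      using DERIV_pow[of "Suc n" x] by (simp add: has_field_derivative_at_within)
    from DERIV_cdivide[OF this, of "real (Suc n)"] show ?thesis by simp
  qed
  then have "((\<lambda>x. x ^ n) has_integral b ^ Suc n / Suc n - a ^ Suc n / Suc n) {a..b}"
    using assms by (intro fundamental_theorem_of_calculus)
      (auto simp: has_real_derivative_iff_has_vector_derivative[symmetric])
  then show ?thesis by (simp add: diff_divide_distrib)
qed

lemma triangle_prior_nonneg: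
  assumes "0 < \<alpha>" "\<alpha> < 1"
  shows "0 \<le> triangle_prior \<alpha> p"
  using assms by (simp add: triangle_prior_def)

lemma borel_measurable_triangle_prior: "triangle_prior \<alpha> \<in> borel_measurable borel"
proof -
  have "triangle_prior \<alpha> = (\<lambda>p. indicator {0<..\<alpha>} p * (2 / \<alpha> * p)
      + indicator {\<alpha><..<1} p * (2 / (1 - \<alpha>) * (1 - p)))"
    by (auto simp: triangle_prior_def indicator_def)
  then show ?thesis by simp
qed

lemma has_integral_triangle_prior_moment:
  fixes \<alpha> :: real
  assumes "0 < \<alpha>" "\<alpha> < 1"
  shows "((\<lambda>p. p ^ k * triangle_prior \<alpha> p) has_integral
      2 / \<alpha> * (\<alpha> ^ (k + 2) / (k + 2))
      + 2 / (1 - \<alpha>) * ((1 - \<alpha> ^ (k + 1)) / (k + 1) - (1 - \<alpha> ^ (k + 2)) / (k + 2))) {0<..<1}"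
    (is "(?f has_integral ?I1 + ?I2) _")
proof -
  have "((\<lambda>p. 2 / \<alpha> * p ^ Suc k) has_integral ?I1) {0..\<alpha>}"
    using has_integral_power_Icc[of 0 \<alpha> "Suc k"] assms
    by (intro has_integral_mult_right) (simp add: add.commute)
  then have left: "(?f has_integral ?I1) {0..\<alpha>}"
    by (rule has_integral_eq[rotated]) (auto simp: triangle_prior_def)
  have "((\<lambda>p. 2 / (1 - \<alpha>) * (p ^ k - p ^ Suc k)) has_integral ?I2) {\<alpha>..1}"
    using has_integral_power_Icc[of \<alpha> 1 k] has_integral_power_Icc[of \<alpha> 1 "Suc k"] assms
    by (intro has_integral_mult_right has_integral_diff) (auto simp: add.commute)
  then have right: "(?f has_integral ?I2) {\<alpha>..1}"
  proof (rule has_integral_eq[rotated])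
    fix p assume "p \<in> {\<alpha>..1}"
    then show "2 / (1 - \<alpha>) * (p ^ k - p ^ Suc k) = ?f p"
      using assms by (cases "p = \<alpha>") (auto simp: triangle_prior_def field_simps)
  qed
  have "(?f has_integral ?I1 + ?I2) {0..1}"
    using has_integral_combine[OF _ _ left right] assms by simp
  then show ?thesis
    by (simp add: has_integral_Icc_iff_Ioo)
qed

lemma set_lborel_integral_triangle_prior_moment:
  fixes \<alpha> :: real
  assumes "0 < \<alpha>" "\<alpha> < 1"
  shows "(LINT p:{0<..<1}|lborel. p ^ k * triangle_prior \<alpha> p) =
      2 / \<alpha> * (\<alpha> ^ (k + 2) / (k + 2))
      + 2 / (1 - \<alpha>) * ((1 - \<alpha> ^ (k + 1)) / (k + 1) - (1 - \<alpha> ^ (k + 2)) / (k + 2))"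
  using assms borel_measurable_triangle_prior[of \<alpha>]
  by (intro set_lborel_integral_eq_has_integral_nonneg has_integral_triangle_prior_moment)
    (auto simp: triangle_prior_nonneg)

lemma set_lborel_integral_triangle_prior_first_moment:
  fixes \<alpha> :: real
  assumes "0 < \<alpha>" "\<alpha> < 1"
  shows "(LINT p:{0<..<1}|lborel. p * triangle_prior \<alpha> p) = (1 + \<alpha>) / 3"
proof -
  have "(LINT p:{0<..<1}|lborel. p * triangle_prior \<alpha> p)
      = (LINT p:{0<..<1}|lborel. p ^ 1 * triangle_prior \<alpha> p)"
    by simp
  also have "\<dots> = (1 + \<alpha>) / 3"
    unfolding set_lborel_integral_triangle_prior_moment[OF assms]
    using assms by (simp add: field_simps)
  finally show ?thesis .
qed

lemma set_lborel_integral_triangle_prior_second_moment: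
  fixes \<alpha> :: real
  assumes "0 < \<alpha>" "\<alpha> < 1"
  shows "(LINT p:{0<..<1}|lborel. p\<^sup>2 * triangle_prior \<alpha> p) = (1 + \<alpha> + \<alpha>\<^sup>2) / 6"
  unfolding set_lborel_integral_triangle_prior_moment[OF assms]
  using assms by (simp add: field_simps)
    (simp add: algebra_simps power2_eq_square power3_eq_cube power4_eq_xxxx)

lemma posterior_mean_success:
  assumes "0 < \<alpha>" "\<alpha> < 1"
  shows "posterior_mean \<alpha> 1 = g_post \<alpha>"
proof -
  have "posterior_mean \<alpha> 1 =
      (LINT p:{0<..<1}|lborel. p\<^sup>2 * triangle_prior \<alpha> p) /
      (LINT p:{0<..<1}|lborel. p * triangle_prior \<alpha> p)"
    by (simp add: posterior_mean_def bern_lik_def power2_eq_square)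
  also have "\<dots> = g_post \<alpha>"
    unfolding set_lborel_integral_triangle_prior_first_moment[OF assms]
      set_lborel_integral_triangle_prior_second_moment[OF assms] g_post_def
    using assms by (simp add: field_simps)
  finally show ?thesis .
qed

lemma g_post_fixed_point_iff:
  fixes \<tau> :: real
  assumes "0 < \<tau>"
  shows "\<tau> = g_post \<tau> \<longleftrightarrow> \<tau>\<^sup>2 + \<tau> - 1 = 0"
  using assms by (simp add: g_post_def field_simps) (simp add: algebra_simps power2_eq_square)

lemma positive_root_golden_quadratic:
  fixes \<tau> :: real
  assumes "0 < \<tau>"
  shows "\<tau>\<^sup>2 + \<tau> - 1 = 0 \<longleftrightarrow> \<tau> = (sqrt 5 - 1) / 2"
proof
  assume "\<tau>\<^sup>2 + \<tau> - 1 = 0"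
  then have "(2 * \<tau> + 1)\<^sup>2 = 5"
    by (simp add: algebra_simps power2_eq_square)
  then have "sqrt 5 = 2 * \<tau> + 1"
    using assms by (intro real_sqrt_unique) auto
  then show "\<tau> = (sqrt 5 - 1) / 2" by simp
next
  assume "\<tau> = (sqrt 5 - 1) / 2"
  then have "2 * \<tau> + 1 = sqrt 5"
    by simp
  then have "(2 * \<tau> + 1)\<^sup>2 = 5"
    by simp
  then show "\<tau>\<^sup>2 + \<tau> - 1 = 0"
    by (simp add: power2_eq_square algebra_simps)
qed

lemma inverse_golden_ratio: "1 / golden_ratio = (sqrt 5 - 1) / 2"
proof -
  have "(sqrt 5 - 1) * (1 + sqrt 5) = 4"
    by (simp add: algebra_simps)
  moreover have "1 + sqrt 5 \<noteq> 0"
    by (smt (verit) real_sqrt_ge_zero)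
  ultimately show ?thesis
    unfolding golden_ratio_def by (simp add: field_simps)
qed

theorem mainTheorem2:
  shows "(\<forall>\<alpha>::real. 0 < \<alpha> \<and> \<alpha> < 1 \<longrightarrow> posterior_mean \<alpha> 1 = g_post \<alpha>)
    \<and> {\<tau>::real. 0 < \<tau> \<and> \<tau> < 1 \<and> \<tau> = g_post \<tau>} = {(sqrt 5 - 1) / 2}
    \<and> (sqrt 5 - 1) / 2 = 1 / golden_ratio"
proof (intro conjI allI impI)
  show "posterior_mean \<alpha> 1 = g_post \<alpha>" if "0 < \<alpha> \<and> \<alpha> < 1" for \<alpha> :: real
    by (rule posterior_mean_success) (use that in auto)
  have "2 < sqrt 5" "sqrt 5 < 3"
    by (simp_all add: real_less_rsqrt real_less_lsqrt)
  then have "0 < (sqrt 5 - 1) / 2" "(sqrt 5 - 1) / 2 < (1::real)"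
    by simp_all
  then have "0 < \<tau> \<and> \<tau> < 1 \<and> \<tau> = g_post \<tau> \<longleftrightarrow> \<tau> = (sqrt 5 - 1) / 2" for \<tau> :: real
    using g_post_fixed_point_iff positive_root_golden_quadratic by blast
  then show "{\<tau>::real. 0 < \<tau> \<and> \<tau> < 1 \<and> \<tau> = g_post \<tau>} = {(sqrt 5 - 1) / 2}"
    by blast
  show "(sqrt 5 - 1) / 2 = 1 / golden_ratio"
    by (simp add: inverse_golden_ratio)
qed

end
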